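(* Let $E: y^2=x^3+Ax+B$ ($A,B\in\mathbb{Z}$) be an elliptic curve over $\mathbb{Q}$. There exist constants $c_1,c_2$ depending only on $E$ such that for every squarefree positive integer $D$ and every point $P\ne O$ of $E_D(\mathbb{Q})$, where $E_D: y^2=x^3+D^2Ax+D^3B$, \[c_1-\log D\le \hat h(P)-h(P)\le c_2+\log D,\] and if in addition $x(P)>D$, then \[c_1-\log D\le \hat h(P)-h(P)\le c_2.\]
   Context: $h$ is the absolute logarithmic Weil height on $\overline{\mathbb{Q}}$; for a point $P$ on an elliptic curve in Weierstrass form, $h(P)=h(x(P))$ and $\hat h(P)=\lim_{n\to\infty} h(2^nP)/4^n$ (the canonical height, not normalized by the factor $1/2$). *)

theory Defs
  imports Complex_Main "HOL-Computational_Algebra.Squarefree"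
begin

text \<open>Points of a Weierstrass curve y^2 = x^3 + a x + b over Q:
  None is the point at infinity O, Some (x,y) an affine point.\<close>

definition on_curve :: "rat \<Rightarrow> rat \<Rightarrow> rat \<times> rat \<Rightarrow> bool" where
  "on_curve a b p \<longleftrightarrow> (snd p)^2 = (fst p)^3 + a * fst p + b"

definition weil_height :: "rat \<Rightarrow> real" where
  "weil_height r = (case quotient_of r of (p, q) \<Rightarrow> ln (real_of_int (max \<bar>p\<bar> \<bar>q\<bar>)))"

definition pt_height :: "(rat \<times> rat) option \<Rightarrow> real" where
  "pt_height P = (case P of None \<Rightarrow> 0 | Some p \<Rightarrow> weil_height (fst p))"

definition ec_double :: "rat \<Rightarrow> rat \<Rightarrow> (rat \<times> rat) option \<Rightarrow> (rat \<times> rat) option" where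
  "ec_double a b P = (case P of None \<Rightarrow> None
     | Some (x, y) \<Rightarrow> if y = 0 then None else
         (let l = (3 * x^2 + a) / (2 * y); x' = l^2 - 2 * x; y' = l * (x - x') - y
          in Some (x', y')))"

text \<open>Canonical height (not normalised by 1/2): lim h(2^n P) / 4^n.\<close>
definition canonical_height :: "rat \<Rightarrow> rat \<Rightarrow> (rat \<times> rat) option \<Rightarrow> real" where
  "canonical_height a b P = lim (\<lambda>n. pt_height ((ec_double a b ^^ n) P) / 4 ^ n)"

end

theory Submission
  imports Defs
begin

(* Write x(P)/D = u/v in lowest terms. Since (x, y) |-> (x/D, y/D^(3/2)) maps E_D onto E,
   the duplication formula of E gives x(2P)/D = F(u,v)/G(u,v) for integral binary quartics F, G
   depending only on A and B. Two Bezout identities with right-hand sides 4 Delta u^7 and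
   4 Delta v^7, Delta = 4 A^3 + 27 B^2, show that gcd(F(u,v), G(u,v)) divides 4 Delta and that
   max(|F(u,v)|, |G(u,v)|) is comparable to max(|u|, |v|)^4. Hence h(x(2P)/D) = 4 h(x(P)/D) + O(1)
   uniformly in D, and Tate's telescoping argument gives |hhat(P) - h(x(P)/D)| <= C/3.
   Finally h(x) and h(x/D) differ by at most log D, and h(x/D) <= h(x) once x > D. *)

lemma ln_le_ln_add:
  fixes a b c :: real
  assumes "0 < a" "0 < c" "a \<le> b * c"
  shows "ln a \<le> ln b + ln c"
proof -
  have "0 < b * c" using assms by linarith
  then have "0 < b" using assms(2) by (simp add: zero_less_mult_iff)
  have "ln a \<le> ln (b * c)" using assms \<open>0 < b * c\<close> by simp
  also have "\<dots> = ln b + ln c" using \<open>0 < b\<close> assms(2) by (simp add: ln_mult)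
  finally show ?thesis .
qed

lemma tate_telescoping:
  fixes s :: "nat \<Rightarrow> real"
  assumes q: "q > 1" and s: "\<And>n. \<bar>s (Suc n) - q * s n\<bar> \<le> C"
  shows "\<exists>L. (\<lambda>n. s n / q ^ n) \<longlonglongrightarrow> L \<and> \<bar>L - s 0\<bar> \<le> C / (q - 1)"
proof -
  define w where "w = (\<lambda>n. s n / q ^ n)"
  define g where "g n = C / q * (1 / q) ^ n" for n
  have step: "\<bar>w (Suc n) - w n\<bar> \<le> g n" for n
  proof -
    have "w (Suc n) - w n = (s (Suc n) - q * s n) / q ^ Suc n"
      using q by (simp add: w_def field_simps)
    then have "\<bar>w (Suc n) - w n\<bar> \<le> C / q ^ Suc n"
      using q s[of n] by (simp add: divide_right_mono)
    also have "\<dots> = g n" by (simp add: g_def power_one_over)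
    finally show ?thesis .
  qed
  have "g sums (C / q * (1 / (1 - 1 / q)))"
    unfolding g_def using q by (intro sums_mult geometric_sums) simp
  moreover have "C / q * (1 / (1 - 1 / q)) = C / (q - 1)"
    using q by (simp add: field_simps)
  ultimately have g: "g sums (C / (q - 1))" by (simp only:)
  have d: "summable (\<lambda>n. w (Suc n) - w n)"
    using step by (intro summable_comparison_test'[OF sums_summable[OF g]]) simp
  have "(\<lambda>n. w 0 + (\<Sum>i<n. w (Suc i) - w i)) \<longlonglongrightarrow> w 0 + (\<Sum>n. w (Suc n) - w n)"
    by (intro tendsto_add tendsto_const summable_LIMSEQ d)
  then have "w \<longlonglongrightarrow> w 0 + (\<Sum>n. w (Suc n) - w n)"
    by (simp add: sum_lessThan_telescope)
  moreover have "\<bar>\<Sum>n. w (Suc n) - w n\<bar> \<le> C / (q - 1)"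
    using norm_suminf_le[of "\<lambda>n. w (Suc n) - w n" g] step g by (simp add: sums_iff)
  moreover have "w 0 = s 0" by (simp add: w_def)
  ultimately show ?thesis
    unfolding w_def[symmetric] by (intro exI[of _ "w 0 + (\<Sum>n. w (Suc n) - w n)"]) simp
qed

lemma LIMSEQ_div_power_bounded_diff:
  fixes s t :: "nat \<Rightarrow> real"
  assumes "q > 1" "(\<lambda>n. s n / q ^ n) \<longlonglongrightarrow> L" "\<And>n. \<bar>t n - s n\<bar> \<le> K"
  shows "(\<lambda>n. t n / q ^ n) \<longlonglongrightarrow> L"
proof (rule tendsto_sandwich)
  have K: "(\<lambda>n. K / q ^ n) \<longlonglongrightarrow> 0" using assms(1) by (rule LIMSEQ_divide_realpow_zero)
  show "(\<lambda>n. s n / q ^ n - K / q ^ n) \<longlonglongrightarrow> L" using tendsto_diff[OF assms(2) K] by simp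
  show "(\<lambda>n. s n / q ^ n + K / q ^ n) \<longlonglongrightarrow> L" using tendsto_add[OF assms(2) K] by simp
  have close: "\<bar>t n / q ^ n - s n / q ^ n\<bar> \<le> K / q ^ n" for n
    using assms(1) assms(3)[of n] by (simp add: diff_divide_distrib[symmetric] divide_right_mono)
  have "s n / q ^ n - K / q ^ n \<le> t n / q ^ n" "t n / q ^ n \<le> s n / q ^ n + K / q ^ n" for n
    using close[of n] unfolding abs_le_iff by linarith+
  then show "\<forall>\<^sub>F n in sequentially. s n / q ^ n - K / q ^ n \<le> t n / q ^ n"
    and "\<forall>\<^sub>F n in sequentially. t n / q ^ n \<le> s n / q ^ n + K / q ^ n"
    by (simp_all add: always_eventually)
qed

lemma abs_lincomb_le_max:
  fixes a b F G :: "'a :: linordered_idom"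
  shows "\<bar>a * F + b * G\<bar> \<le> (\<bar>a\<bar> + \<bar>b\<bar>) * max \<bar>F\<bar> \<bar>G\<bar>"
proof -
  have "\<bar>a * F\<bar> \<le> \<bar>a\<bar> * max \<bar>F\<bar> \<bar>G\<bar>" "\<bar>b * G\<bar> \<le> \<bar>b\<bar> * max \<bar>F\<bar> \<bar>G\<bar>"
    by (simp_all add: abs_mult mult_left_mono)
  then show ?thesis
    using abs_triangle_ineq[of "a * F" "b * G"] by (simp add: distrib_right)
qed

definition pair_height :: "int \<Rightarrow> int \<Rightarrow> real" where
  "pair_height a b = ln (real_of_int (max \<bar>a\<bar> \<bar>b\<bar>)) - ln (real_of_int (gcd a b))"

lemma pair_height_coprime: "coprime a b \<Longrightarrow> pair_height a b = ln (real_of_int (max \<bar>a\<bar> \<bar>b\<bar>))"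
  by (simp add: pair_height_def)

lemma weil_height_quotient_of: "quotient_of r = (p, q) \<Longrightarrow> weil_height r = ln (real_of_int (max \<bar>p\<bar> \<bar>q\<bar>))"
  by (simp add: weil_height_def)

lemma weil_height_of_int_div: "weil_height (of_int a / of_int b) = pair_height a b"
proof (cases "b = 0")
  case True
  then show ?thesis by (simp add: weil_height_def pair_height_def)
next
  case False
  define g where "g = gcd a b"
  have g: "g > 0" using False by (simp add: g_def)
  have "real_of_int \<bar>a div g\<bar> = real_of_int \<bar>a\<bar> / real_of_int g"
       "real_of_int \<bar>b div g\<bar> = real_of_int \<bar>b\<bar> / real_of_int g"
    unfolding g_def by (simp_all add: real_of_int_div)
  then have "real_of_int (max \<bar>a div g\<bar> \<bar>b div g\<bar>) = real_of_int (max \<bar>a\<bar> \<bar>b\<bar>) / real_of_int g"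
    using g by (simp only: of_int_max) (simp add: max_divide_distrib_right)
  moreover have "quotient_of (of_int a / of_int b) = Rat.normalize (a, b)"
    by (metis Fract_of_int_quotient quotient_of_Fract)
  moreover have "max \<bar>a\<bar> \<bar>b\<bar> > 0" using False by (simp add: less_max_iff_disj)
  ultimately show ?thesis
    using False g by (auto simp: weil_height_def pair_height_def Rat.normalize_def Let_def dvd_div_neg ln_div g_def)
qed

lemma weil_height_divide_int:
  fixes x :: rat and D :: int
  assumes D: "D > 0"
  shows "\<bar>weil_height x - weil_height (x / of_int D)\<bar> \<le> ln (real_of_int D)"
    and "x > of_int D \<Longrightarrow> weil_height (x / of_int D) \<le> weil_height x"
proof -
  obtain p q where pq: "quotient_of x = (p, q)" by force
  have q: "q > 0" using quotient_of_denom_pos[OF pq] .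
  have x: "x = of_int p / of_int q" using quotient_of_div[OF pq] .
  define m where "m = max \<bar>p\<bar> q"
  define m' where "m' = max \<bar>p\<bar> (q * D)"
  define g where "g = gcd p (q * D)"
  have hx: "weil_height x = ln (real_of_int m)"
    using weil_height_quotient_of[OF pq] q by (simp add: m_def)
  have "x / of_int D = of_int p / of_int (q * D)" using x by simp
  then have hxD: "weil_height (x / of_int D) = ln (real_of_int m') - ln (real_of_int g)"
    using q D by (simp only: weil_height_of_int_div) (simp add: pair_height_def m'_def g_def abs_mult)
  have "g dvd gcd (p * D) (q * D)" unfolding g_def by simp
  also have "gcd (p * D) (q * D) = D"
    using quotient_of_coprime[OF pq] D by (simp add: gcd_mult_right gcd.commute[of q])
  finally have g: "0 < g" "g \<le> D" using q D by (auto simp: g_def zdvd_imp_le)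
  have qD: "q \<le> q * D" "\<bar>p\<bar> \<le> D * \<bar>p\<bar>" using q D by (simp_all add: mult_le_cancel_right1)
  have m: "1 \<le> m" "m \<le> m'" "m' \<le> D * m"
    unfolding m_def m'_def using q D qD
    by (simp add: le_max_iff_disj, intro max.mono, simp_all add: max_mult_distrib_left max.mono mult.commute)
  have "ln (real_of_int m') \<le> ln (real_of_int D * real_of_int m)"
    using m by (simp flip: of_int_mult)
  then have "ln (real_of_int m) \<le> ln (real_of_int m')" "ln (real_of_int m') \<le> ln (real_of_int D) + ln (real_of_int m)"
    using m D by (simp_all add: ln_mult)
  moreover have "0 \<le> ln (real_of_int g)" "ln (real_of_int g) \<le> ln (real_of_int D)"
    using g by simp_all
  ultimately show "\<bar>weil_height x - weil_height (x / of_int D)\<bar> \<le> ln (real_of_int D)"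
    unfolding hx hxD by linarith
  assume "x > of_int D"
  then have "p > q * D" using q by (simp add: x field_simps flip: of_int_mult)
  then have "q * D \<le> \<bar>p\<bar>" "q \<le> \<bar>p\<bar>" using qD by linarith+
  then have "m' = m" unfolding m_def m'_def by (simp add: max_absorb1)
  then show "weil_height (x / of_int D) \<le> weil_height x"
    unfolding hx hxD using \<open>0 \<le> ln (real_of_int g)\<close> by simp
qed

definition binary_form :: "int list \<Rightarrow> int \<Rightarrow> int \<Rightarrow> int" where
  "binary_form cs u v = (\<Sum>i<length cs. cs ! i * u ^ (length cs - 1 - i) * v ^ i)"

lemma binary_form_Nil [simp]: "binary_form [] u v = 0"
  by (simp add: binary_form_def)

lemma binary_form_Cons: "binary_form (c # cs) u v = c * u ^ length cs + v * binary_form cs u v"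
  unfolding binary_form_def length_Cons sum.lessThan_Suc_shift
  by (simp add: sum_distrib_left algebra_simps)

lemma abs_binary_form_le:
  assumes "\<bar>u\<bar> \<le> M" "\<bar>v\<bar> \<le> M" "length cs = Suc d"
  shows "\<bar>binary_form cs u v\<bar> \<le> sum_list (map abs cs) * M ^ d"
proof -
  have term_le: "\<bar>cs ! i * u ^ (d - i) * v ^ i\<bar> \<le> \<bar>cs ! i\<bar> * M ^ d" if "i < length cs" for i
  proof -
    have "\<bar>u\<bar> ^ (d - i) * \<bar>v\<bar> ^ i \<le> M ^ (d - i) * M ^ i"
      using assms(1,2) by (intro mult_mono power_mono) auto
    also have "\<dots> = M ^ d" using that assms(3) by (simp flip: power_add)
    finally show ?thesis by (simp add: abs_mult power_abs mult.assoc mult_left_mono)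
  qed
  have "\<bar>binary_form cs u v\<bar> = \<bar>\<Sum>i<length cs. cs ! i * u ^ (d - i) * v ^ i\<bar>"
    using assms(3) by (simp add: binary_form_def)
  also have "\<dots> \<le> (\<Sum>i<length cs. \<bar>cs ! i * u ^ (d - i) * v ^ i\<bar>)"
    by (rule sum_abs)
  also have "\<dots> \<le> (\<Sum>i<length cs. \<bar>cs ! i\<bar> * M ^ d)"
    by (intro sum_mono term_le) simp
  also have "\<dots> = sum_list (map abs cs) * M ^ d"
    by (simp add: sum_list_sum_nth atLeast0LessThan sum_distrib_right)
  finally show ?thesis .
qed

lemma abs_bezout_le:
  assumes "\<And>u v. binary_form cs u v * F u v + binary_form ds u v * G u v = R u v"
    and "length cs = Suc d" "length ds = Suc d"
  shows "\<exists>K \<ge> 0. \<forall>u v. \<bar>R u v\<bar> \<le> K * (max \<bar>u\<bar> \<bar>v\<bar>) ^ d * max \<bar>F u v\<bar> \<bar>G u v\<bar>"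
proof (intro exI conjI allI)
  show "0 \<le> sum_list (map abs cs) + sum_list (map abs ds)"
    by (intro add_nonneg_nonneg sum_list_nonneg) auto
  fix u v :: int
  let ?M = "max \<bar>u\<bar> \<bar>v\<bar>"
  have "\<bar>R u v\<bar> \<le> (\<bar>binary_form cs u v\<bar> + \<bar>binary_form ds u v\<bar>) * max \<bar>F u v\<bar> \<bar>G u v\<bar>"
    unfolding assms(1)[symmetric] by (rule abs_lincomb_le_max)
  also have "\<dots> \<le> (sum_list (map abs cs) + sum_list (map abs ds)) * ?M ^ d * max \<bar>F u v\<bar> \<bar>G u v\<bar>"
    using abs_binary_form_le[of u ?M v cs d] abs_binary_form_le[of u ?M v ds d] assms(2,3)
    by (intro mult_right_mono) (simp_all add: distrib_right add_mono le_max_iff_disj)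
  finally show "\<bar>R u v\<bar> \<le> (sum_list (map abs cs) + sum_list (map abs ds))
                        * ?M ^ d * max \<bar>F u v\<bar> \<bar>G u v\<bar>" .
qed

(* x(2Q) = double_num A B u v / double_den A B u v for x(Q) = u/v on y^2 = x^3 + A x + B. *)
definition double_num :: "int \<Rightarrow> int \<Rightarrow> int \<Rightarrow> int \<Rightarrow> int" where
  "double_num A B = binary_form [1, 0, -2 * A, -8 * B, A^2]"

definition double_den :: "int \<Rightarrow> int \<Rightarrow> int \<Rightarrow> int \<Rightarrow> int" where
  "double_den A B = binary_form [0, 4, 0, 4 * A, 4 * B]"

lemma double_bezout_v:
  "binary_form [0, 12, 0, 16 * A] u v * double_num A B u v
   + binary_form [-3, 0, 5 * A, 27 * B] u v * double_den A B u v = 4 * (4 * A^3 + 27 * B^2) * v^7"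
  unfolding double_num_def double_den_def by (simp add: binary_form_Cons algebra_simps eval_nat_numeral)

lemma double_bezout_u:
  "binary_form [4 * (4 * A^3 + 27 * B^2), -4 * A^2 * B, 4 * A * (3 * A^3 + 22 * B^2), 12 * B * (A^3 + 8 * B^2)] u v
     * double_num A B u v
   + binary_form [A^2 * B, A * (5 * A^3 + 32 * B^2), 2 * B * (13 * A^3 + 96 * B^2), -3 * A^2 * (A^3 + 8 * B^2)] u v
     * double_den A B u v
   = 4 * (4 * A^3 + 27 * B^2) * u^7"
  unfolding double_num_def double_den_def by (simp add: binary_form_Cons algebra_simps eval_nat_numeral)

lemma gcd_double_dvd:
  assumes "coprime u v"
  shows "gcd (double_num A B u v) (double_den A B u v) dvd 4 * (4 * A^3 + 27 * B^2)"
proof -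
  let ?g = "gcd (double_num A B u v) (double_den A B u v)" and ?R = "4 * (4 * A^3 + 27 * B^2)"
  have "?g dvd ?R * u^7" "?g dvd ?R * v^7"
    unfolding double_bezout_u[where u = u and v = v, symmetric]
      double_bezout_v[where u = u and v = v, symmetric]
    by (rule dvd_add dvd_mult gcd_dvd1 gcd_dvd2)+
  then have "?g dvd gcd (?R * u^7) (?R * v^7)" by simp
  also have "gcd (?R * u^7) (?R * v^7) = \<bar>?R\<bar>"
    using assms by (simp add: gcd_mult_left)
  finally show ?thesis by simp
qed

lemma max_abs_double_le:
  "\<exists>K. \<forall>u v. max \<bar>double_num A B u v\<bar> \<bar>double_den A B u v\<bar> \<le> K * (max \<bar>u\<bar> \<bar>v\<bar>) ^ 4"
proof (intro exI allI)
  fix u v :: int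
  let ?M = "max \<bar>u\<bar> \<bar>v\<bar>"
    and ?KF = "sum_list (map abs [1, 0, -2 * A, -8 * B, A^2])"
    and ?KG = "sum_list (map abs [0, 4, 0, 4 * A, 4 * B])"
  have uv: "\<bar>u\<bar> \<le> ?M" "\<bar>v\<bar> \<le> ?M" by simp_all
  have "\<bar>double_num A B u v\<bar> \<le> ?KF * ?M ^ 4"
    unfolding double_num_def by (rule abs_binary_form_le[OF uv]) simp
  moreover have "\<bar>double_den A B u v\<bar> \<le> ?KG * ?M ^ 4"
    unfolding double_den_def by (rule abs_binary_form_le[OF uv]) simp
  moreover have "0 \<le> ?KF * ?M ^ 4" "0 \<le> ?KG * ?M ^ 4"
    by (intro mult_nonneg_nonneg; auto)+
  ultimately show "max \<bar>double_num A B u v\<bar> \<bar>double_den A B u v\<bar> \<le> (?KF + ?KG) * ?M ^ 4"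
    unfolding distrib_right by (intro max.boundedI) linarith+
qed

lemma abs_discr_max_pow7_le:
  "\<exists>K \<ge> 0. \<forall>u v. \<bar>4 * (4 * A^3 + 27 * B^2)\<bar> * (max \<bar>u\<bar> \<bar>v\<bar>) ^ 7
              \<le> K * (max \<bar>u\<bar> \<bar>v\<bar>) ^ 3 * max \<bar>double_num A B u v\<bar> \<bar>double_den A B u v\<bar>"
proof -
  define R where "R = 4 * (4 * A^3 + 27 * B^2)"
  obtain Ku where "0 \<le> Ku" and Ku: "\<And>u v. \<bar>R * u^7\<bar>
      \<le> Ku * (max \<bar>u\<bar> \<bar>v\<bar>) ^ 3 * max \<bar>double_num A B u v\<bar> \<bar>double_den A B u v\<bar>"
    using abs_bezout_le[OF double_bezout_u[where A = A and B = B], where d = 3]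
    unfolding R_def by auto
  obtain Kv where "0 \<le> Kv" and Kv: "\<And>u v. \<bar>R * v^7\<bar>
      \<le> Kv * (max \<bar>u\<bar> \<bar>v\<bar>) ^ 3 * max \<bar>double_num A B u v\<bar> \<bar>double_den A B u v\<bar>"
    using abs_bezout_le[OF double_bezout_v[where A = A and B = B], where d = 3]
    unfolding R_def by auto
  show ?thesis
    unfolding R_def[symmetric]
  proof (intro exI conjI allI)
    show "0 \<le> Ku + Kv" using \<open>0 \<le> Ku\<close> \<open>0 \<le> Kv\<close> by simp
    fix u v :: int
    let ?M = "max \<bar>u\<bar> \<bar>v\<bar>" and ?N = "max \<bar>double_num A B u v\<bar> \<bar>double_den A B u v\<bar>"
    have "?M = \<bar>u\<bar> \<or> ?M = \<bar>v\<bar>" by (simp add: max_def)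
    then have "\<bar>R\<bar> * ?M ^ 7 = \<bar>R * u^7\<bar> \<or> \<bar>R\<bar> * ?M ^ 7 = \<bar>R * v^7\<bar>"
      by (auto simp: abs_mult power_abs)
    moreover have "Ku * ?M ^ 3 * ?N \<le> (Ku + Kv) * ?M ^ 3 * ?N" "Kv * ?M ^ 3 * ?N \<le> (Ku + Kv) * ?M ^ 3 * ?N"
      using \<open>0 \<le> Ku\<close> \<open>0 \<le> Kv\<close> by (simp_all add: mult_right_mono)
    ultimately show "\<bar>R\<bar> * ?M ^ 7 \<le> (Ku + Kv) * ?M ^ 3 * ?N"
      using Ku[where u = u and v = v] Kv[where u = u and v = v] by (elim disjE) linarith+
  qed
qed

lemma max_abs_double_ge:
  "\<exists>K. \<forall>u v. \<bar>4 * (4 * A^3 + 27 * B^2)\<bar> * (max \<bar>u\<bar> \<bar>v\<bar>) ^ 4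
              \<le> K * max \<bar>double_num A B u v\<bar> \<bar>double_den A B u v\<bar>"
proof -
  obtain K where "0 \<le> K" and K: "\<And>u v. \<bar>4 * (4 * A^3 + 27 * B^2)\<bar> * (max \<bar>u\<bar> \<bar>v\<bar>) ^ 7
      \<le> K * (max \<bar>u\<bar> \<bar>v\<bar>) ^ 3 * max \<bar>double_num A B u v\<bar> \<bar>double_den A B u v\<bar>"
    using abs_discr_max_pow7_le by blast
  show ?thesis
  proof (intro exI allI)
    fix u v :: int
    let ?M = "max \<bar>u\<bar> \<bar>v\<bar>" and ?N = "max \<bar>double_num A B u v\<bar> \<bar>double_den A B u v\<bar>"
      and ?E = "\<bar>4 * (4 * A^3 + 27 * B^2)\<bar>"
    have "?M ^ 3 * (?E * ?M ^ 4) \<le> ?M ^ 3 * (K * ?N)"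
      using K[of u v] by (simp add: algebra_simps flip: power_add)
    moreover have "0 \<le> K * ?N" using \<open>0 \<le> K\<close> by simp
    ultimately show "?E * ?M ^ 4 \<le> K * ?N"
      by (cases "?M = 0") (simp_all add: mult_le_cancel_left_pos)
  qed
qed

lemma abs_pair_height_sub_le:
  fixes F G E K1 K2 M :: int
  assumes M: "1 \<le> M" and E: "1 \<le> E" "gcd F G \<le> E"
    and upper: "max \<bar>F\<bar> \<bar>G\<bar> \<le> K1 * M ^ n" and lower: "E * M ^ n \<le> K2 * max \<bar>F\<bar> \<bar>G\<bar>"
  shows "\<bar>pair_height F G - n * ln (real_of_int M)\<bar> \<le> \<bar>ln (real_of_int K1)\<bar> + \<bar>ln (real_of_int K2)\<bar>"
proof -
  define N where "N = max \<bar>F\<bar> \<bar>G\<bar>"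
  have "0 < E * M ^ n" using M E by simp
  also have "\<dots> \<le> K2 * N" using lower by (simp add: N_def)
  finally have "N \<noteq> 0" by auto
  then have N: "1 \<le> N" and "F \<noteq> 0 \<or> G \<noteq> 0" unfolding N_def by auto
  then have g: "1 \<le> gcd F G" by (simp add: int_one_le_iff_zero_less)
  have "ln (real_of_int N) \<le> ln (real_of_int K1) + ln (real_of_int (M ^ n))"
    and "ln (real_of_int (E * M ^ n)) \<le> ln (real_of_int K2) + ln (real_of_int N)"
    using M N E upper lower unfolding N_def[symmetric]
    by (intro ln_le_ln_add, simp_all flip: of_int_mult of_int_power)+
  moreover have "0 \<le> ln (real_of_int (gcd F G))"
    using g by simp
  moreover have "ln (real_of_int (gcd F G)) \<le> ln (real_of_int E)"
    using g E by (subst ln_le_cancel_iff) auto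
  moreover have "ln (real_of_int (M ^ n)) = n * ln (real_of_int M)"
    and "ln (real_of_int (E * M ^ n)) = ln (real_of_int E) + n * ln (real_of_int M)"
    using M E by (simp_all add: ln_mult ln_realpow)
  ultimately show ?thesis
    unfolding pair_height_def N_def[symmetric] by linarith
qed

lemma pair_height_double_bound:
  assumes "4 * A^3 + 27 * B^2 \<noteq> 0"
  shows "\<exists>C. \<forall>u v. coprime u v \<longrightarrow>
           \<bar>pair_height (double_num A B u v) (double_den A B u v) - 4 * pair_height u v\<bar> \<le> C"
proof -
  obtain K1 where K1: "\<And>u v. max \<bar>double_num A B u v\<bar> \<bar>double_den A B u v\<bar> \<le> K1 * (max \<bar>u\<bar> \<bar>v\<bar>) ^ 4"
    using max_abs_double_le by blast
  obtain K2 where K2: "\<And>u v. \<bar>4 * (4 * A^3 + 27 * B^2)\<bar> * (max \<bar>u\<bar> \<bar>v\<bar>) ^ 4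
      \<le> K2 * max \<bar>double_num A B u v\<bar> \<bar>double_den A B u v\<bar>"
    using max_abs_double_ge by blast
  show ?thesis
  proof (intro exI allI impI)
    fix u v :: int
    assume uv: "coprime u v"
    have "4 * (4 * A^3 + 27 * B^2) \<noteq> 0" using assms by simp
    then have "1 \<le> \<bar>4 * (4 * A^3 + 27 * B^2)\<bar>" by linarith
    moreover have "1 \<le> max \<bar>u\<bar> \<bar>v\<bar>" using uv by (cases "u = 0") auto
    moreover have "gcd (double_num A B u v) (double_den A B u v) \<le> \<bar>4 * (4 * A^3 + 27 * B^2)\<bar>"
      using gcd_double_dvd[OF uv] assms by (simp add: zdvd_imp_le)
    ultimately have "\<bar>pair_height (double_num A B u v) (double_den A B u v) - 4 * ln (real_of_int (max \<bar>u\<bar> \<bar>v\<bar>))\<bar>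
                     \<le> \<bar>ln (real_of_int K1)\<bar> + \<bar>ln (real_of_int K2)\<bar>"
      using abs_pair_height_sub_le[OF _ _ _ K1 K2] by simp
    then show "\<bar>pair_height (double_num A B u v) (double_den A B u v) - 4 * pair_height u v\<bar>
               \<le> \<bar>ln (real_of_int K1)\<bar> + \<bar>ln (real_of_int K2)\<bar>"
      using uv by (simp add: pair_height_coprime)
  qed
qed

definition curve_point :: "rat \<Rightarrow> rat \<Rightarrow> (rat \<times> rat) option \<Rightarrow> bool" where
  "curve_point a b P = (case P of None \<Rightarrow> True | Some p \<Rightarrow> on_curve a b p)"

lemma curve_point_ec_double: "curve_point a b P \<Longrightarrow> curve_point a b (ec_double a b P)"
proof (cases P)
  case (Some p)
  obtain x y where p: "p = (x, y)" by force
  assume "curve_point a b P"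
  then have c: "y^2 = x^3 + a * x + b" by (simp add: curve_point_def on_curve_def Some p)
  define l where "l = (3 * x^2 + a) / (2 * y)"
  have "(l * (x - (l^2 - 2 * x)) - y)^2 = (l^2 - 2 * x)^3 + a * (l^2 - 2 * x) + b" if "y \<noteq> 0"
  proof -
    have "2 * y * l = 3 * x^2 + a" using that by (simp add: l_def)
    with c show ?thesis by algebra
  qed
  then show ?thesis
    by (simp add: Some p ec_double_def curve_point_def on_curve_def Let_def l_def)
qed (simp add: ec_double_def curve_point_def)

definition double_x :: "rat \<Rightarrow> rat \<Rightarrow> rat \<Rightarrow> rat" where
  "double_x a b x = (x^4 - 2 * a * x^2 - 8 * b * x + a^2) / (4 * (x^3 + a * x + b))"

(* h(x/D) is the height of the image of (x, y) under the map (x, y) |-> (x/D, y/D^(3/2))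
   from E_D onto E. *)
definition scaled_height :: "int \<Rightarrow> (rat \<times> rat) option \<Rightarrow> real" where
  "scaled_height D P = (case P of None \<Rightarrow> 0 | Some p \<Rightarrow> weil_height (fst p / of_int D))"

(* No hypothesis y \<noteq> 0: for y = 0 the double is O, and double_x divides by 4 y^2 = 0,
   so both sides are 0. *)
lemma scaled_height_ec_double:
  assumes "on_curve a b (x, y)"
  shows "scaled_height D (ec_double a b (Some (x, y))) = weil_height (double_x a b x / of_int D)"
proof (cases "y = 0")
  case True
  then have "x^3 + a * x + b = 0" using assms by (simp add: on_curve_def)
  then show ?thesis using True by (simp add: ec_double_def scaled_height_def double_x_def weil_height_def)
next
  case False
  have c: "y^2 = x^3 + a * x + b" using assms by (simp add: on_curve_def)
  then have "x^3 + a * x + b \<noteq> 0" using False by auto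
  then have "((3 * x^2 + a) / (2 * y))^2 - 2 * x = double_x a b x"
    unfolding double_x_def using False c by (simp add: field_simps power2_eq_square) algebra
  then show ?thesis using False by (simp add: ec_double_def scaled_height_def Let_def)
qed

lemma double_x_twist:
  fixes x :: rat
  assumes "D \<noteq> 0" "v \<noteq> 0" and x: "x / of_int D = of_int u / of_int v"
  shows "double_x (of_int (D^2 * A)) (of_int (D^3 * B)) x / of_int D
         = of_int (double_num A B u v) / of_int (double_den A B u v)"
proof -
  let ?a = "rat_of_int (D^2 * A)" and ?b = "rat_of_int (D^3 * B)"
  have xv: "x * of_int v = of_int D * of_int u" using x assms by (simp add: field_simps)
  have "(x^4 - 2 * ?a * x^2 - 8 * ?b * x + ?a^2) * of_int v^4 = of_int D^4 * of_int (double_num A B u v)"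
    by (simp add: double_num_def binary_form_Cons) (insert xv, algebra)
  then have num: "x^4 - 2 * ?a * x^2 - 8 * ?b * x + ?a^2 = of_int D^4 * of_int (double_num A B u v) / of_int v^4"
    using assms by (simp add: eq_divide_eq)
  have "4 * (x^3 + ?a * x + ?b) * of_int v^4 = of_int D^3 * of_int (double_den A B u v)"
    by (simp add: double_den_def binary_form_Cons) (insert xv, algebra)
  then have den: "4 * (x^3 + ?a * x + ?b) = of_int D^3 * of_int (double_den A B u v) / of_int v^4"
    using assms by (simp add: eq_divide_eq)
  show ?thesis
    unfolding double_x_def num den using assms
    by (cases "double_den A B u v = 0") (simp_all add: field_simps power_eq_if)
qed

lemma scaled_height_Some:
  "quotient_of (x / of_int D) = (u, v) \<Longrightarrow> scaled_height D (Some (x, y)) = pair_height u v"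
  by (simp add: scaled_height_def weil_height_quotient_of pair_height_coprime quotient_of_coprime)

lemma scaled_height_ec_double_pair_height:
  assumes "D > 0" "on_curve (of_int (D^2 * A)) (of_int (D^3 * B)) (x, y)"
    and "quotient_of (x / of_int D) = (u, v)"
  shows "scaled_height D (ec_double (of_int (D^2 * A)) (of_int (D^3 * B)) (Some (x, y)))
         = pair_height (double_num A B u v) (double_den A B u v)"
proof -
  have "v \<noteq> 0" using quotient_of_denom_pos[OF assms(3)] by simp
  have "scaled_height D (ec_double (of_int (D^2 * A)) (of_int (D^3 * B)) (Some (x, y)))
        = weil_height (double_x (of_int (D^2 * A)) (of_int (D^3 * B)) x / of_int D)"
    by (rule scaled_height_ec_double[OF assms(2)])
  also have "double_x (of_int (D^2 * A)) (of_int (D^3 * B)) x / of_int D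
             = of_int (double_num A B u v) / of_int (double_den A B u v)"
    using assms(1) \<open>v \<noteq> 0\<close> by (intro double_x_twist quotient_of_div[OF assms(3)]) simp_all
  finally show ?thesis by (simp only: weil_height_of_int_div)
qed

lemma scaled_height_ec_double_bound:
  assumes "D > 0"
    and bound: "\<And>u v. coprime u v \<Longrightarrow>
      \<bar>pair_height (double_num A B u v) (double_den A B u v) - 4 * pair_height u v\<bar> \<le> C"
    and "curve_point (of_int (D^2 * A)) (of_int (D^3 * B)) P"
  shows "\<bar>scaled_height D (ec_double (of_int (D^2 * A)) (of_int (D^3 * B)) P) - 4 * scaled_height D P\<bar> \<le> C"
proof (cases P)
  case None
  have "0 \<le> C" using bound[of 0 1] by (simp add: order_trans[OF abs_ge_zero])
  then show ?thesis using None by (simp add: ec_double_def scaled_height_def)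
next
  case (Some p)
  obtain x y where p: "p = (x, y)" by force
  obtain u v where uv: "quotient_of (x / of_int D) = (u, v)" by force
  have on: "on_curve (of_int (D^2 * A)) (of_int (D^3 * B)) (x, y)"
    using assms(3) by (simp add: curve_point_def Some p)
  show ?thesis
    unfolding Some p scaled_height_ec_double_pair_height[OF assms(1) on uv] scaled_height_Some[OF uv]
    by (rule bound[OF quotient_of_coprime[OF uv]])
qed

lemma pt_height_scaled_height_bound:
  "D > 0 \<Longrightarrow> \<bar>pt_height P - scaled_height D P\<bar> \<le> ln (real_of_int D)"
  by (cases P) (simp_all add: pt_height_def scaled_height_def weil_height_divide_int)

lemma canonical_height_scaled_height_bound:
  assumes "D > 0"
    and bound: "\<And>u v. coprime u v \<Longrightarrow>
      \<bar>pair_height (double_num A B u v) (double_den A B u v) - 4 * pair_height u v\<bar> \<le> C"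
    and P: "curve_point (of_int (D^2 * A)) (of_int (D^3 * B)) P"
  shows "\<bar>canonical_height (of_int (D^2 * A)) (of_int (D^3 * B)) P - scaled_height D P\<bar> \<le> C / 3"
proof -
  define dbl where "dbl = ec_double (of_int (D^2 * A)) (of_int (D^3 * B))"
  have curve: "curve_point (of_int (D^2 * A)) (of_int (D^3 * B)) ((dbl ^^ n) P)" for n
  proof (induction n)
    case 0
    show ?case using P by (simp only: funpow_0)
  next
    case (Suc n)
    then show ?case unfolding funpow.simps comp_apply dbl_def by (rule curve_point_ec_double)
  qed
  have "\<bar>scaled_height D ((dbl ^^ Suc n) P) - 4 * scaled_height D ((dbl ^^ n) P)\<bar> \<le> C" for n
    using scaled_height_ec_double_bound[OF assms(1) bound curve[of n]]
    unfolding funpow.simps comp_apply dbl_def .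
  then obtain L where L: "(\<lambda>n. scaled_height D ((dbl ^^ n) P) / 4 ^ n) \<longlonglongrightarrow> L"
      and "\<bar>L - scaled_height D P\<bar> \<le> C / 3"
    using tate_telescoping[of 4 "\<lambda>n. scaled_height D ((dbl ^^ n) P)" C] by auto
  moreover have "(\<lambda>n. pt_height ((dbl ^^ n) P) / 4 ^ n) \<longlonglongrightarrow> L"
    using L pt_height_scaled_height_bound[OF assms(1)] by (rule LIMSEQ_div_power_bounded_diff[rotated]) simp
  then have "canonical_height (of_int (D^2 * A)) (of_int (D^3 * B)) P = L"
    unfolding canonical_height_def dbl_def[symmetric] by (rule limI)
  ultimately show ?thesis by simp
qed

theorem lemma3p3:
  fixes A B :: int
  assumes nonsing: "4 * A^3 + 27 * B^2 \<noteq> 0"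
  shows "\<exists>c1 c2 :: real. \<forall>(D::int) (x::rat) (y::rat).
     squarefree D \<and> D > 0 \<and>
     on_curve (of_int (D^2 * A)) (of_int (D^3 * B)) (x, y) \<longrightarrow>
       (let d = canonical_height (of_int (D^2 * A)) (of_int (D^3 * B)) (Some (x, y))
                - pt_height (Some (x, y))
        in c1 - ln (real_of_int D) \<le> d \<and> d \<le> c2 + ln (real_of_int D) \<and>
           (x > of_int D \<longrightarrow> c1 - ln (real_of_int D) \<le> d \<and> d \<le> c2))"
proof -
  obtain C where C: "\<And>u v. coprime u v \<Longrightarrow>
      \<bar>pair_height (double_num A B u v) (double_den A B u v) - 4 * pair_height u v\<bar> \<le> C"
    using pair_height_double_bound[OF nonsing] by blast
  show ?thesis
  proof (rule exI[of _ "- C / 3"], rule exI[of _ "C / 3"], intro allI impI)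
    fix D :: int and x y :: rat
    assume "squarefree D \<and> D > 0 \<and> on_curve (of_int (D^2 * A)) (of_int (D^3 * B)) (x, y)"
    then have D: "D > 0" and P: "curve_point (of_int (D^2 * A)) (of_int (D^3 * B)) (Some (x, y))"
      by (simp_all add: curve_point_def)
    let ?h = "canonical_height (of_int (D^2 * A)) (of_int (D^3 * B)) (Some (x, y))"
    have "\<bar>?h - weil_height (x / of_int D)\<bar> \<le> C / 3"
      using canonical_height_scaled_height_bound[OF D C P] by (simp add: scaled_height_def)
    moreover note weil_height_divide_int[OF D, of x]
    ultimately have "- C / 3 - ln (real_of_int D) \<le> ?h - weil_height x"
      and "?h - weil_height x \<le> C / 3 + ln (real_of_int D)"
      and "x > of_int D \<longrightarrow> ?h - weil_height x \<le> C / 3"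
      unfolding abs_le_iff by fastforce+
    then show "let d = ?h - pt_height (Some (x, y))
        in - C / 3 - ln (real_of_int D) \<le> d \<and> d \<le> C / 3 + ln (real_of_int D) \<and>
           (x > of_int D \<longrightarrow> - C / 3 - ln (real_of_int D) \<le> d \<and> d \<le> C / 3)"
      by (simp add: pt_height_def Let_def)
  qed
qed

end
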